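(* Let $\mathcal{N}\subseteq\mathcal{M}$ be unital $C^*$-algebras with a common unit, and let $p_1,\ldots,p_n\in\mathcal{N}$ be mutually orthogonal projections with $p_1+\cdots+p_n=1$. Let $b\in\mathcal{M}$ and suppose that for each $k$ there exist $x_k\in p_k\mathcal{N}p_k$ and $y_k\in p_k\mathcal{M}p_k$ with $p_kbp_k=x_ky_k-y_kx_k$. Then there exist $d\in\mathcal{N}$ and $z\in\mathcal{M}$ with $b=dz-zd$. *)

theory Defs
  imports Complex_Main
begin

class cstar_algebra = banach + real_normed_algebra_1 +
  fixes scaleC :: "complex \<Rightarrow> 'a \<Rightarrow> 'a"
    and cstar :: "'a \<Rightarrow> 'a"
  assumes scaleC_of_real: "scaleC (complex_of_real r) x = scaleR r x"
    and scaleC_add_right: "scaleC c (x + y) = scaleC c x + scaleC c y"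
    and scaleC_add_left: "scaleC (c + d) x = scaleC c x + scaleC d x"
    and scaleC_scaleC: "scaleC c (scaleC d x) = scaleC (c * d) x"
    and scaleC_one: "scaleC 1 x = x"
    and scaleC_mult_left: "scaleC c x * y = scaleC c (x * y)"
    and scaleC_mult_right: "x * scaleC c y = scaleC c (x * y)"
    and norm_scaleC: "norm (scaleC c x) = cmod c * norm x"
    and cstar_cstar: "cstar (cstar x) = x"
    and cstar_add: "cstar (x + y) = cstar x + cstar y"
    and cstar_mult: "cstar (x * y) = cstar y * cstar x"
    and cstar_scaleC: "cstar (scaleC c x) = scaleC (cnj c) (cstar x)"
    and cstar_identity: "norm (cstar x * x) = (norm x)\<^sup>2"

definition unital_cstar_subalgebra :: "'a::cstar_algebra set \<Rightarrow> bool" where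
  "unital_cstar_subalgebra N \<longleftrightarrow>
     1 \<in> N \<and>
     (\<forall>x\<in>N. \<forall>y\<in>N. x + y \<in> N) \<and>
     (\<forall>x\<in>N. \<forall>y\<in>N. x * y \<in> N) \<and>
     (\<forall>c. \<forall>x\<in>N. scaleC c x \<in> N) \<and>
     (\<forall>x\<in>N. cstar x \<in> N) \<and>
     closed N"

definition is_projection :: "'a::cstar_algebra \<Rightarrow> bool" where
  "is_projection p \<longleftrightarrow> p * p = p \<and> cstar p = p"

definition corner :: "'a::{times} \<Rightarrow> 'a set \<Rightarrow> 'a set" where
  "corner p A = {p * a * p | a. a \<in> A}"

end

theory Submission
  imports Defs "HOL-Analysis.Elementary_Metric_Spaces"
begin

text \<open>Choose real scalars \<open>\<lambda>\<^sub>k\<close> spaced further apart than \<open>\<parallel>x\<^sub>j\<parallel> + \<parallel>x\<^sub>k\<parallel>\<close> and put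
\<open>d = \<Sum>\<^sub>k (x\<^sub>k + \<lambda>\<^sub>k p\<^sub>k) \<in> N\<close>. With respect to \<open>1 = \<Sum>\<^sub>k p\<^sub>k\<close> the equation \<open>b = dz - zd\<close>
splits into block equations. The diagonal block \<open>(k, k)\<close> is solved by \<open>y\<^sub>k\<close>; the block
\<open>(j, k)\<close> with \<open>j \<noteq> k\<close> is the Sylvester equation
\<open>(\<lambda>\<^sub>j - \<lambda>\<^sub>k) w + x\<^sub>j w - w x\<^sub>k = p\<^sub>j b p\<^sub>k\<close>, which the Banach fixed point theorem solves
because \<open>w \<mapsto> x\<^sub>j w - w x\<^sub>k\<close> has norm less than \<open>|\<lambda>\<^sub>j - \<lambda>\<^sub>k|\<close>.\<close>

lemma sylvester_equation_solvable:
  fixes a e w :: "'a::{banach, real_normed_algebra}"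
  assumes small: "norm a + norm e < \<bar>\<mu>\<bar>"
  shows "\<exists>z. \<mu> *\<^sub>R z + (a * z - z * e) = w"
proof -
  define c where "c = (norm a + norm e) / \<bar>\<mu>\<bar>"
  define f where "f z = (1 / \<mu>) *\<^sub>R (w - (a * z - z * e))" for z
  have \<mu>: "\<mu> \<noteq> 0"
    using small norm_ge_zero[of a] norm_ge_zero[of e] by linarith
  have "dist (f x) (f y) \<le> c * dist x y" for x y
  proof -
    have "f x - f y = (1 / \<mu>) *\<^sub>R (a * (y - x) - (y - x) * e)"
      unfolding f_def by (simp add: algebra_simps)
    also have "norm \<dots> \<le> (norm (a * (y - x)) + norm ((y - x) * e)) / \<bar>\<mu>\<bar>"
      by (simp add: divide_right_mono norm_triangle_ineq4)
    also have "\<dots> \<le> c * norm (x - y)"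
      unfolding c_def using norm_mult_ineq[of a "y - x"] norm_mult_ineq[of "y - x" e]
      by (simp add: divide_right_mono norm_minus_commute field_simps)
    finally show ?thesis by (simp add: dist_norm)
  qed
  moreover have "0 \<le> c" "c < 1"
    unfolding c_def using small \<mu> by auto
  ultimately obtain z where "f z = z"
    using banach_fix_type[of c f] by blast
  then have "\<mu> *\<^sub>R z = \<mu> *\<^sub>R f z"
    by simp
  also have "\<dots> = w - (a * z - z * e)"
    unfolding f_def using \<mu> by simp
  finally have "\<mu> *\<^sub>R z = w - (a * z - z * e)" .
  then have "\<mu> *\<^sub>R z + (a * z - z * e) = w"
    by simp
  then show ?thesis ..
qed

lemma corner_sylvester_solvable:
  fixes p q x e w :: "'a::{banach, real_normed_algebra}"
  assumes "p * p = p" "q * q = q" "p * x = x" "x * p = x" "q * e = e" "e * q = e"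
    and "norm x + norm e < \<bar>\<alpha> - \<beta>\<bar>"
  shows "\<exists>W. (x + \<alpha> *\<^sub>R p) * W - W * (e + \<beta> *\<^sub>R q) = p * w * q"
proof -
  obtain z where z: "(\<alpha> - \<beta>) *\<^sub>R z + (x * z - z * e) = w"
    using sylvester_equation_solvable assms(7) by blast
  have absorb: "x * (p * y) = x * y" "p * (x * y) = x * y" "p * (p * y) = p * y" for y
    using assms by (metis mult.assoc)+
  have "(x + \<alpha> *\<^sub>R p) * (p * z * q) - (p * z * q) * (e + \<beta> *\<^sub>R q)
      = p * ((\<alpha> - \<beta>) *\<^sub>R z + (x * z - z * e)) * q"
    using assms(2,5,6) by (simp add: algebra_simps absorb)
  then show ?thesis
    using z by blast
qed

lemma commutator_add_scaleR_corner_unit: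
  fixes p x y :: "'a::real_algebra_1"
  assumes "p * y = y" "y * p = y"
  shows "(x + c *\<^sub>R p) * y - y * (x + c *\<^sub>R p) = x * y - y * x"
  using assms by (simp add: algebra_simps)

lemma idempotent_sandwich_absorbs:
  fixes p x :: "'a::semigroup_mult"
  assumes "p * p = p" "p * x * p = x"
  shows "p * x = x" "x * p = x"
proof -
  have "p * x = (p * p) * x * p" "x * p = p * x * (p * p)"
    by (subst (1) assms(2)[symmetric], simp add: mult.assoc)+
  then show "p * x = x" "x * p = x"
    unfolding assms .
qed

lemma corner_sandwich:
  fixes p x :: "'a::semigroup_mult"
  assumes "p * p = p" "x \<in> corner p A"
  shows "p * x * p = x"
proof -
  obtain a where x: "x = p * a * p"
    using assms(2) unfolding corner_def by blast
  have "p * x * p = (p * p) * a * (p * p)"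
    unfolding x by (simp add: mult.assoc)
  then show ?thesis
    unfolding assms(1) x .
qed

lemma corner_subset_subalgebra:
  assumes "unital_cstar_subalgebra N" "p \<in> N"
  shows "corner p N \<subseteq> N"
  using assms unfolding unital_cstar_subalgebra_def corner_def by blast

lemma unital_cstar_subalgebra_scaleR:
  assumes "unital_cstar_subalgebra N" "x \<in> N"
  shows "r *\<^sub>R x \<in> N"
  using assms scaleC_of_real[of r x] unfolding unital_cstar_subalgebra_def by metis

lemma unital_cstar_subalgebra_sum:
  assumes N: "unital_cstar_subalgebra N" and f: "\<And>k. k \<in> A \<Longrightarrow> f k \<in> N"
  shows "sum f A \<in> N"
proof -
  have "0 \<in> N"
    using unital_cstar_subalgebra_scaleR[OF N, of 1 0] N
    unfolding unital_cstar_subalgebra_def by simp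
  with f show ?thesis
    using N unfolding unital_cstar_subalgebra_def
    by (induction A rule: infinite_finite_induct) auto
qed

lemma separated_multiples:
  fixes f :: "nat \<Rightarrow> real"
  assumes "finite I" "\<And>i. i \<in> I \<Longrightarrow> 0 \<le> f i" "j \<in> I" "k \<in> I" "j \<noteq> k"
  shows "f j + f k < \<bar>real j * (1 + sum f I) - real k * (1 + sum f I)\<bar>"
proof -
  have L: "0 \<le> sum f I"
    using assms(2) by (simp add: sum_nonneg)
  have "f j + f k = sum f {j, k}"
    using assms(5) by simp
  also have "\<dots> \<le> sum f I"
    using assms by (intro sum_mono2) auto
  also have "\<dots> < 1 * (1 + sum f I)"
    by simp
  also have "\<dots> \<le> \<bar>real j - real k\<bar> * (1 + sum f I)"
    using assms(5) L by (intro mult_right_mono) auto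
  also have "\<dots> = \<bar>real j * (1 + sum f I) - real k * (1 + sum f I)\<bar>"
    using L by (simp add: abs_mult flip: left_diff_distrib)
  finally show ?thesis .
qed

locale complete_orthogonal_idempotents =
  fixes I :: "'i set" and p :: "'i \<Rightarrow> 'a::ring_1"
  assumes finite_index: "finite I"
    and mult_idempotents: "j \<in> I \<Longrightarrow> k \<in> I \<Longrightarrow> p j * p k = (if j = k then p k else 0)"
    and sum_idempotents: "(\<Sum>k\<in>I. p k) = 1"
begin

lemma idempotent: "k \<in> I \<Longrightarrow> p k * p k = p k"
  using mult_idempotents by simp

lemma block_idem:
  assumes "j \<in> I" "k \<in> I"
  shows "p j * (p j * v * p k) * p k = p j * v * p k"
  using idempotent[OF assms(1)] idempotent[OF assms(2)]
  by (simp add: mult.assoc flip: mult.assoc[of "p j" "p j"])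

lemma block_decomposition: "v = (\<Sum>j\<in>I. \<Sum>k\<in>I. p j * v * p k)"
proof -
  have "v = (\<Sum>j\<in>I. p j) * v * (\<Sum>k\<in>I. p k)"
    by (simp add: sum_idempotents)
  also have "\<dots> = (\<Sum>k\<in>I. \<Sum>j\<in>I. p j * v * p k)"
    by (simp add: sum_distrib_left sum_distrib_right)
  also have "\<dots> = (\<Sum>j\<in>I. \<Sum>k\<in>I. p j * v * p k)"
    by (rule sum.swap)
  finally show ?thesis .
qed

lemma blocks_eqI:
  assumes "\<And>j k. j \<in> I \<Longrightarrow> k \<in> I \<Longrightarrow> p j * u * p k = p j * v * p k"
  shows "u = v"
  using block_decomposition[of u] block_decomposition[of v] assms by simp

lemma block_of_block_sum:
  assumes Z: "\<And>i l. i \<in> I \<Longrightarrow> l \<in> I \<Longrightarrow> p i * Z i l * p l = Z i l"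
    and "j \<in> I" "k \<in> I"
  shows "p j * (\<Sum>i\<in>I. \<Sum>l\<in>I. Z i l) * p k = Z j k"
proof -
  have "p j * Z i l * p k = (if l = k then if i = j then Z j k else 0 else 0)"
    if "i \<in> I" "l \<in> I" for i l
  proof -
    have "p j * Z i l * p k = (p j * p i) * Z i l * (p l * p k)"
      by (subst (1) Z[OF that, symmetric]) (simp add: mult.assoc)
    then show ?thesis
      using mult_idempotents[OF \<open>j \<in> I\<close> \<open>i \<in> I\<close>] mult_idempotents[OF \<open>l \<in> I\<close> \<open>k \<in> I\<close>]
        Z[OF that] by auto
  qed
  then have "p j * (\<Sum>i\<in>I. \<Sum>l\<in>I. Z i l) * p k
      = (\<Sum>i\<in>I. \<Sum>l\<in>I. if l = k then if i = j then Z j k else 0 else 0)"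
    by (simp add: sum_distrib_left sum_distrib_right mult.assoc)
  also have "\<dots> = Z j k"
    using assms(2,3) finite_index by simp
  finally show ?thesis .
qed

lemma block_diagonal_mult:
  assumes D: "\<And>k. k \<in> I \<Longrightarrow> p k * D k * p k = D k" and "j \<in> I"
  shows "p j * (\<Sum>k\<in>I. D k) = D j" "(\<Sum>k\<in>I. D k) * p j = D j"
proof -
  have "p j * D k = (if k = j then D j else 0) \<and> D k * p j = (if k = j then D j else 0)"
    if "k \<in> I" for k
  proof -
    note absorbs = idempotent_sandwich_absorbs[OF idempotent[OF that] D[OF that]]
    have "p j * D k = (p j * p k) * D k"
      by (simp add: absorbs mult.assoc)
    moreover have "D k * p j = D k * (p k * p j)"
      by (simp add: absorbs flip: mult.assoc)
    ultimately show ?thesis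
      using mult_idempotents[OF assms(2) that] mult_idempotents[OF that assms(2)] absorbs
      by auto
  qed
  then show "p j * (\<Sum>k\<in>I. D k) = D j" "(\<Sum>k\<in>I. D k) * p j = D j"
    using assms(2) finite_index by (simp_all add: sum_distrib_left sum_distrib_right)
qed

lemma block_of_commutator_block_diagonal:
  assumes D: "\<And>k. k \<in> I \<Longrightarrow> p k * D k * p k = D k" and "j \<in> I" "k \<in> I"
  defines "d \<equiv> \<Sum>k\<in>I. D k"
  shows "p j * (d * z - z * d) * p k = D j * (p j * z * p k) - (p j * z * p k) * D k"
proof -
  have "p j * (d * z - z * d) * p k = (p j * d) * z * p k - p j * z * (d * p k)"
    by (simp add: algebra_simps)
  also have "\<dots> = (D j * p j) * z * p k - p j * z * (p k * D k)"
    using block_diagonal_mult[OF D] assms(2,3)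
      idempotent_sandwich_absorbs[OF idempotent D, OF assms(2) assms(2)]
      idempotent_sandwich_absorbs[OF idempotent D, OF assms(3) assms(3)]
    unfolding d_def by simp
  finally show ?thesis
    by (simp add: mult.assoc)
qed

lemma commutator_if_blocks_solvable:
  assumes D: "\<And>k. k \<in> I \<Longrightarrow> p k * D k * p k = D k"
    and solvable: "\<And>j k. j \<in> I \<Longrightarrow> k \<in> I \<Longrightarrow> \<exists>W. D j * W - W * D k = p j * b * p k"
  shows "\<exists>z. b = (\<Sum>k\<in>I. D k) * z - z * (\<Sum>k\<in>I. D k)"
proof -
  obtain W where W: "\<And>j k. j \<in> I \<Longrightarrow> k \<in> I \<Longrightarrow> D j * W j k - W j k * D k = p j * b * p k"
    using solvable by metis
  define Z where "Z j k = p j * W j k * p k" for j k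
  have Z_block: "p j * Z j k * p k = Z j k" if "j \<in> I" "k \<in> I" for j k
    unfolding Z_def using that by (rule block_idem)
  have D_Z: "D j * Z j k - Z j k * D k = p j * b * p k" if "j \<in> I" "k \<in> I" for j k
  proof -
    note absorbs = idempotent_sandwich_absorbs[OF idempotent D]
    have "D j * Z j k = (D j * p j) * W j k * p k"
      "p j * (D j * W j k) * p k = (p j * D j) * W j k * p k"
      "Z j k * D k = p j * W j k * (p k * D k)"
      "p j * (W j k * D k) * p k = p j * W j k * (D k * p k)"
      unfolding Z_def by (simp_all add: mult.assoc)
    then have "D j * Z j k - Z j k * D k = p j * (D j * W j k - W j k * D k) * p k"
      using absorbs[OF that(1) that(1)] absorbs[OF that(2) that(2)]
      by (simp add: right_diff_distrib left_diff_distrib)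
    also have "\<dots> = p j * b * p k"
      using W[OF that] block_idem[OF that] by simp
    finally show ?thesis .
  qed
  define z where "z = (\<Sum>i\<in>I. \<Sum>l\<in>I. Z i l)"
  have "b = (\<Sum>k\<in>I. D k) * z - z * (\<Sum>k\<in>I. D k)"
    by (rule blocks_eqI)
      (simp add: block_of_commutator_block_diagonal[OF D] block_of_block_sum[OF Z_block]
        z_def D_Z)
  then show ?thesis ..
qed

end

lemma commutator_with_separated_diagonal:
  fixes p x y :: "nat \<Rightarrow> 'a::{banach, real_normed_algebra_1}"
  assumes "complete_orthogonal_idempotents I p"
    and x: "\<And>k. k \<in> I \<Longrightarrow> p k * x k = x k \<and> x k * p k = x k"
    and y: "\<And>k. k \<in> I \<Longrightarrow> p k * y k = y k \<and> y k * p k = y k"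
    and b: "\<And>k. k \<in> I \<Longrightarrow> p k * b * p k = x k * y k - y k * x k"
  defines "L \<equiv> 1 + (\<Sum>k\<in>I. norm (x k))"
  shows "\<exists>z. b = (\<Sum>k\<in>I. x k + (real k * L) *\<^sub>R p k) * z - z * (\<Sum>k\<in>I. x k + (real k * L) *\<^sub>R p k)"
proof -
  interpret complete_orthogonal_idempotents I p
    by fact
  show ?thesis
  proof (rule commutator_if_blocks_solvable)
    show "p k * (x k + (real k * L) *\<^sub>R p k) * p k = x k + (real k * L) *\<^sub>R p k"
      if "k \<in> I" for k
      using x[OF that] idempotent[OF that] by (simp add: algebra_simps)
    show "\<exists>W. (x j + (real j * L) *\<^sub>R p j) * W - W * (x k + (real k * L) *\<^sub>R p k) = p j * b * p k"
      if "j \<in> I" "k \<in> I" for j k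
    proof (cases "j = k")
      case True
      then show ?thesis
        using commutator_add_scaleR_corner_unit y[OF that(2)] b[OF that(2)] by metis
    next
      case False
      have "norm (x j) + norm (x k) < \<bar>real j * L - real k * L\<bar>"
        unfolding L_def using that False finite_index by (intro separated_multiples) auto
      then show ?thesis
        using idempotent[OF that(1)] idempotent[OF that(2)] x[OF that(1)] x[OF that(2)]
        by (intro corner_sylvester_solvable) auto
    qed
  qed
qed

theorem lemma3p15:
  fixes N :: "'a::cstar_algebra set"
    and p :: "nat \<Rightarrow> 'a"
    and n :: nat
    and b :: 'a
  assumes "unital_cstar_subalgebra N"
    and "\<forall>k\<in>{1..n}. p k \<in> N \<and> is_projection (p k)"
    and "\<forall>j\<in>{1..n}. \<forall>k\<in>{1..n}. j \<noteq> k \<longrightarrow> p j * p k = 0"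
    and "(\<Sum>k=1..n. p k) = 1"
    and "\<forall>k\<in>{1..n}. \<exists>x\<in>corner (p k) N. \<exists>y\<in>corner (p k) UNIV.
            p k * b * p k = x * y - y * x"
  shows "\<exists>d\<in>N. \<exists>z. b = d * z - z * d"
proof -
  have idempotents: "complete_orthogonal_idempotents {1..n} p"
    using assms(2-4) unfolding is_projection_def by unfold_locales auto
  obtain x y where xy: "\<And>k. k \<in> {1..n} \<Longrightarrow> x k \<in> corner (p k) N \<and> y k \<in> corner (p k) UNIV
      \<and> p k * b * p k = x k * y k - y k * x k"
    using assms(5) by metis
  have idem: "p k * p k = p k" if "k \<in> {1..n}" for k
    using assms(2) that unfolding is_projection_def by blast
  note absorbs = idempotent_sandwich_absorbs[OF idem corner_sandwich[OF idem]]
  define L where "L = 1 + (\<Sum>k=1..n. norm (x k))"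
  have "x k + (real k * L) *\<^sub>R p k \<in> N" if "k \<in> {1..n}" for k
    using xy[OF that] corner_subset_subalgebra[OF assms(1)] assms(2) that
      unital_cstar_subalgebra_scaleR[OF assms(1)] assms(1)
    unfolding unital_cstar_subalgebra_def by blast
  then have "(\<Sum>k=1..n. x k + (real k * L) *\<^sub>R p k) \<in> N"
    by (rule unital_cstar_subalgebra_sum[OF assms(1)])
  moreover have "\<exists>z. b = (\<Sum>k=1..n. x k + (real k * L) *\<^sub>R p k) * z
      - z * (\<Sum>k=1..n. x k + (real k * L) *\<^sub>R p k)"
    unfolding L_def using xy absorbs
    by (intro commutator_with_separated_diagonal[OF idempotents]) blast+
  ultimately show ?thesis
    by blast
qed

end
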